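(* For every left-c.e. metric space $\mathcal{M}=(M,d,(p_k)_{k\in\mathbb{N}})$ there exists a left-c.e. ultrametric space $\mathcal{A}$ that has no computable isometric embedding into $\mathcal{M}$. In particular, there is no left-c.e. metric space universal for all left-c.e. metric spaces (without a bound on the diameter) under computable isometric embeddings.
   Context: $\mathcal{M}=(M,d,(p_k))$ is a left-c.e. metric space if it is a Polish metric space with dense sequence of special points $(p_k)$ and $d(p_i,p_k)$ is a left-c.e. real uniformly in $i,k$. An ultrametric space is one satisfying $d(x,z)\le\max(d(x,y),d(y,z))$. A Cauchy name in $\mathcal{M}$ is $g:\mathbb{N}\to\mathbb{N}$ with $d(p_{g(i)},p_{g(k)})\le 2^{-i}$ for $i\le k$. An isometric embedding $f$ of $(A,d_A,(q_k))$ into $\mathcal{M}$ is computable if uniformly in $k$ one can compute a Cauchy name for $f(q_k)$. *)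

theory Defs
  imports "HOL-Analysis.Analysis" "HOL-Library.Nat_Bijection"
begin

datatype recf =
    RZ
  | RS
  | RProj nat
  | RComp recf "recf list"
  | RPrim recf recf
  | RMn recf

inductive rec_eval :: "recf \<Rightarrow> nat list \<Rightarrow> nat \<Rightarrow> bool" where
  zero: "rec_eval RZ xs 0"
| succ: "rec_eval RS (x # xs) (Suc x)"
| proj: "i < length xs \<Longrightarrow> rec_eval (RProj i) xs (xs ! i)"
| comp: "list_all2 (\<lambda>g y. rec_eval g xs y) gs ys \<Longrightarrow> rec_eval f ys z
           \<Longrightarrow> rec_eval (RComp f gs) xs z"
| prim0: "rec_eval f xs y \<Longrightarrow> rec_eval (RPrim f g) (0 # xs) y"
| primS: "rec_eval (RPrim f g) (n # xs) y \<Longrightarrow> rec_eval g (y # n # xs) z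
           \<Longrightarrow> rec_eval (RPrim f g) (Suc n # xs) z"
| mn: "rec_eval f (n # xs) 0 \<Longrightarrow> (\<forall>m<n. \<exists>y. rec_eval f (m # xs) (Suc y))
           \<Longrightarrow> rec_eval (RMn f) xs n"

definition computable1 :: "(nat \<Rightarrow> nat) \<Rightarrow> bool" where
  "computable1 f \<longleftrightarrow> (\<exists>c. \<forall>x. rec_eval c [x] (f x))"

definition computable2 :: "(nat \<Rightarrow> nat \<Rightarrow> nat) \<Rightarrow> bool" where
  "computable2 f \<longleftrightarrow> (\<exists>c. \<forall>x y. rec_eval c [x, y] (f x y))"

definition computable3 :: "(nat \<Rightarrow> nat \<Rightarrow> nat \<Rightarrow> nat) \<Rightarrow> bool" where
  "computable3 f \<longleftrightarrow> (\<exists>c. \<forall>x y z. rec_eval c [x, y, z] (f x y z))"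

definition rat_of_code :: "nat \<Rightarrow> real" where
  "rat_of_code n = (case prod_decode n of (a, b) \<Rightarrow> real_of_int (int_decode a) / real (Suc b))"

definition left_ce_dists :: "('a \<Rightarrow> 'a \<Rightarrow> real) \<Rightarrow> (nat \<Rightarrow> 'a) \<Rightarrow> bool" where
  "left_ce_dists d p \<longleftrightarrow>
     (\<exists>F. computable3 F \<and>
        (\<forall>i k. mono (\<lambda>s. rat_of_code (F i k s)) \<and>
               (\<lambda>s. rat_of_code (F i k s)) \<longlonglongrightarrow> d (p i) (p k)))"

definition left_ce_metric_space :: "'a set \<Rightarrow> ('a \<Rightarrow> 'a \<Rightarrow> real) \<Rightarrow> (nat \<Rightarrow> 'a) \<Rightarrow> bool" where
  "left_ce_metric_space M d p \<longleftrightarrow>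
     Metric_space M d \<and> Metric_space.mcomplete M d \<and>
     range p \<subseteq> M \<and> Metric_space.mtopology M d closure_of (range p) = M \<and>
     left_ce_dists d p"

definition ultrametric :: "'a set \<Rightarrow> ('a \<Rightarrow> 'a \<Rightarrow> real) \<Rightarrow> bool" where
  "ultrametric M d \<longleftrightarrow> (\<forall>x\<in>M. \<forall>y\<in>M. \<forall>z\<in>M. d x z \<le> max (d x y) (d y z))"

definition cauchy_name :: "('a \<Rightarrow> 'a \<Rightarrow> real) \<Rightarrow> (nat \<Rightarrow> 'a) \<Rightarrow> (nat \<Rightarrow> nat) \<Rightarrow> bool" where
  "cauchy_name d p g \<longleftrightarrow> (\<forall>i k. i \<le> k \<longrightarrow> d (p (g i)) (p (g k)) \<le> (1/2) ^ i)"

definition cauchy_name_for :: "('a \<Rightarrow> 'a \<Rightarrow> real) \<Rightarrow> (nat \<Rightarrow> 'a) \<Rightarrow> (nat \<Rightarrow> nat) \<Rightarrow> 'a \<Rightarrow> bool" where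
  "cauchy_name_for d p g x \<longleftrightarrow> cauchy_name d p g \<and> (\<lambda>i. d (p (g i)) x) \<longlonglongrightarrow> 0"

definition isometric_embedding ::
  "'b set \<Rightarrow> ('b \<Rightarrow> 'b \<Rightarrow> real) \<Rightarrow> 'a set \<Rightarrow> ('a \<Rightarrow> 'a \<Rightarrow> real) \<Rightarrow> ('b \<Rightarrow> 'a) \<Rightarrow> bool" where
  "isometric_embedding A dA M dM f \<longleftrightarrow>
     f ` A \<subseteq> M \<and> (\<forall>x\<in>A. \<forall>y\<in>A. dM (f x) (f y) = dA x y)"

definition computable_isometric_embedding ::
  "'b set \<Rightarrow> ('b \<Rightarrow> 'b \<Rightarrow> real) \<Rightarrow> (nat \<Rightarrow> 'b) \<Rightarrow>
   'a set \<Rightarrow> ('a \<Rightarrow> 'a \<Rightarrow> real) \<Rightarrow> (nat \<Rightarrow> 'a) \<Rightarrow> ('b \<Rightarrow> 'a) \<Rightarrow> bool" where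
  "computable_isometric_embedding A dA q M dM p f \<longleftrightarrow>
     isometric_embedding A dA M dM f \<and>
     (\<exists>h. computable2 h \<and> (\<forall>k. cauchy_name_for dM p (h k) (f (q k))))"

end

theory Submission
  imports Defs
begin

text \<open>Diagonalisation against all computable embeddings. Fix a computable approximation F of
  the distances of M from below. The space A consists of the points 0, 1, 2, ... of the real
  line with d(i, k) = max (w (i div 2)) (w (k div 2)) for i \<noteq> k, an ultrametric whose points
  are at least 3 apart. The weight w e is 3, unless the e-th program, asked for the first points
  p x and p y of Cauchy names of the images of 2e and 2e + 1, answers; then w e = 3 + d(p x, p y).
  Since these images lie within 1 of p x and p y, their distance is at most 2 + d(p x, p y), so
  the e-th program cannot describe an isometric embedding. The weights are left-c.e. uniformly
  in e because all programs can be simulated by one computable step function.\<close>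

section \<open>Closure properties of the computable functions\<close>

definition computes :: "recf \<Rightarrow> nat \<Rightarrow> (nat list \<Rightarrow> nat) \<Rightarrow> bool" where
  "computes c n f \<longleftrightarrow> (\<forall>xs. length xs = n \<longrightarrow> rec_eval c xs (f xs))"

definition rec_computable :: "nat \<Rightarrow> (nat list \<Rightarrow> nat) \<Rightarrow> bool" where
  "rec_computable n f \<longleftrightarrow> (\<exists>c. computes c n f)"

lemma rec_computable_cong:
  "rec_computable n f \<Longrightarrow> (\<And>xs. length xs = n \<Longrightarrow> f xs = g xs) \<Longrightarrow> rec_computable n g"
  unfolding rec_computable_def computes_def by metis

lemma rec_computable_proj: "i < n \<Longrightarrow> rec_computable n (\<lambda>xs. xs ! i)"
  unfolding rec_computable_def computes_def by (blast intro: rec_eval.proj)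

lemma rec_computable_compose:
  assumes f: "rec_computable (length gs) f" and gs: "\<forall>g\<in>set gs. rec_computable n g"
  shows "rec_computable n (\<lambda>xs. f (map (\<lambda>g. g xs) gs))"
proof -
  obtain cf where cf: "computes cf (length gs) f" using f unfolding rec_computable_def by blast
  have "\<forall>g\<in>set gs. \<exists>c. computes c n g" using gs unfolding rec_computable_def by blast
  then obtain cs where cs: "list_all2 (\<lambda>c g. computes c n g) cs gs"
    by (induction gs) (auto intro: exI[of _ "_ # _"])
  have "computes (RComp cf cs) n (\<lambda>xs. f (map (\<lambda>g. g xs) gs))"
    unfolding computes_def
  proof (intro allI impI)
    fix xs :: "nat list" assume "length xs = n"
    then have "list_all2 (\<lambda>c y. rec_eval c xs y) cs (map (\<lambda>g. g xs) gs)"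
      using cs unfolding list_all2_conv_all_nth computes_def by auto
    moreover have "rec_eval cf (map (\<lambda>g. g xs) gs) (f (map (\<lambda>g. g xs) gs))"
      using cf unfolding computes_def by auto
    ultimately show "rec_eval (RComp cf cs) xs (f (map (\<lambda>g. g xs) gs))"
      by (rule rec_eval.comp)
  qed
  then show ?thesis unfolding rec_computable_def by blast
qed

lemma rec_computable_compose1:
  "rec_computable 1 (\<lambda>ys. f (ys ! 0)) \<Longrightarrow> rec_computable n g \<Longrightarrow>
   rec_computable n (\<lambda>xs. f (g xs))"
  using rec_computable_compose[of "[g]" "\<lambda>ys. f (ys ! 0)" n] by simp

lemma rec_computable_compose2:
  "rec_computable 2 (\<lambda>ys. f (ys ! 0) (ys ! 1)) \<Longrightarrow> rec_computable n g \<Longrightarrow> rec_computable n h \<Longrightarrow>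
   rec_computable n (\<lambda>xs. f (g xs) (h xs))"
  using rec_computable_compose[of "[g, h]" "\<lambda>ys. f (ys ! 0) (ys ! 1)" n]
  by (simp add: numeral_2_eq_2)

lemma rec_computable_compose3:
  "rec_computable 3 (\<lambda>ys. f (ys ! 0) (ys ! 1) (ys ! 2)) \<Longrightarrow>
   rec_computable n g \<Longrightarrow> rec_computable n h \<Longrightarrow> rec_computable n k \<Longrightarrow>
   rec_computable n (\<lambda>xs. f (g xs) (h xs) (k xs))"
  using rec_computable_compose[of "[g, h, k]" "\<lambda>ys. f (ys ! 0) (ys ! 1) (ys ! 2)" n]
  by (simp add: numeral_3_eq_3)

lemma rec_computable_Suc_unary: "rec_computable 1 (\<lambda>xs. Suc (xs ! 0))"
proof -
  have "computes RS 1 (\<lambda>xs. Suc (xs ! 0))"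
    unfolding computes_def by (auto simp: length_Suc_conv intro: rec_eval.succ)
  then show ?thesis unfolding rec_computable_def by blast
qed

lemma rec_computable_Suc: "rec_computable n g \<Longrightarrow> rec_computable n (\<lambda>xs. Suc (g xs))"
  by (rule rec_computable_compose1[OF rec_computable_Suc_unary])

lemma rec_computable_const: "rec_computable n (\<lambda>xs. k)"
proof (induction k)
  case 0
  show ?case unfolding rec_computable_def computes_def by (blast intro: rec_eval.zero)
qed (rule rec_computable_Suc)

lemma computes_rec_nat:
  assumes f: "computes cf n f" and g: "computes cg (Suc (Suc n)) g"
  shows "computes (RPrim cf cg) (Suc n)
           (\<lambda>xs. rec_nat (f (tl xs)) (\<lambda>k y. g (y # k # tl xs)) (hd xs))"
  unfolding computes_def
proof (intro allI impI)
  fix xs :: "nat list" assume "length xs = Suc n"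
  then obtain x ys where xs: "xs = x # ys" and len: "length ys = n" by (cases xs) auto
  have "rec_eval (RPrim cf cg) (x # ys) (rec_nat (f ys) (\<lambda>k y. g (y # k # ys)) x)"
  proof (induction x)
    case 0
    have "rec_eval cf ys (f ys)" using f len unfolding computes_def by simp
    from rec_eval.prim0[OF this] show ?case by simp
  next
    case (Suc x)
    let ?y = "rec_nat (f ys) (\<lambda>k y. g (y # k # ys)) x"
    have "rec_eval cg (?y # x # ys) (g (?y # x # ys))"
      using g len unfolding computes_def by simp
    from rec_eval.primS[OF Suc this] show ?case by simp
  qed
  then show "rec_eval (RPrim cf cg) xs (rec_nat (f (tl xs)) (\<lambda>k y. g (y # k # tl xs)) (hd xs))"
    unfolding xs list.sel .
qed

lemma rec_computable_rec_nat:
  "rec_computable n f \<Longrightarrow> rec_computable (Suc (Suc n)) g \<Longrightarrow>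
   rec_computable (Suc n) (\<lambda>xs. rec_nat (f (tl xs)) (\<lambda>k y. g (y # k # tl xs)) (hd xs))"
  unfolding rec_computable_def using computes_rec_nat by blast

lemma computes_Least:
  assumes f: "computes cf (Suc n) f" and ex: "\<And>xs. length xs = n \<Longrightarrow> \<exists>k. f (k # xs) = 0"
  shows "computes (RMn cf) n (\<lambda>xs. LEAST k. f (k # xs) = 0)"
  unfolding computes_def
proof (intro allI impI)
  fix xs :: "nat list" assume len: "length xs = n"
  have eval: "rec_eval cf (k # xs) (f (k # xs))" for k
    using f len unfolding computes_def by simp
  define m where "m = (LEAST k. f (k # xs) = 0)"
  have "f (m # xs) = 0" unfolding m_def using ex[OF len] by (rule LeastI_ex)
  then have "rec_eval cf (m # xs) 0" using eval[of m] by simp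
  moreover have "\<exists>y. rec_eval cf (k # xs) (Suc y)" if "k < m" for k
    using not_less_Least[OF that[unfolded m_def]] not0_implies_Suc eval by metis
  ultimately show "rec_eval (RMn cf) xs m" by (blast intro: rec_eval.mn)
qed

lemma rec_computable_Least:
  "rec_computable (Suc n) f \<Longrightarrow> (\<And>xs. length xs = n \<Longrightarrow> \<exists>k. f (k # xs) = 0) \<Longrightarrow>
   rec_computable n (\<lambda>xs. LEAST k. f (k # xs) = 0)"
  unfolding rec_computable_def using computes_Least by blast

lemma rec_computable_funpow_param:
  assumes f: "rec_computable 2 (\<lambda>ys. f (ys ! 0) (ys ! 1))"
    and k: "rec_computable n k" and g: "rec_computable n g" and a: "rec_computable n a"
  shows "rec_computable n (\<lambda>xs. ((\<lambda>z. f z (a xs)) ^^ (k xs)) (g xs))"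
proof -
  have "rec_computable (Suc (Suc 2)) (\<lambda>ys. f (ys ! 0) (ys ! 3))"
    using rec_computable_compose2[OF f rec_computable_proj[of 0 4] rec_computable_proj[of 3 4]]
    by (simp add: numeral_eq_Suc)
  from rec_computable_rec_nat[OF rec_computable_proj[of 0 2] this]
  have "rec_computable 3 (\<lambda>xs. rec_nat (tl xs ! 0) (\<lambda>k y. f y (tl xs ! 1)) (hd xs))"
    by (simp add: numeral_3_eq_3)
  then have "rec_computable 3 (\<lambda>ys. ((\<lambda>z. f z (ys ! 2)) ^^ (ys ! 0)) (ys ! 1))"
  proof (rule rec_computable_cong)
    fix xs :: "nat list" assume "length xs = 3"
    then obtain x y b where xs: "xs = [x, y, b]" by (auto simp: length_Suc_conv numeral_3_eq_3)
    show "rec_nat (tl xs ! 0) (\<lambda>k y. f y (tl xs ! 1)) (hd xs) = ((\<lambda>z. f z (xs ! 2)) ^^ (xs ! 0)) (xs ! 1)"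
      unfolding xs by (induction x) auto
  qed
  from rec_computable_compose3[OF this k g a] show ?thesis .
qed

lemma rec_computable_funpow:
  assumes "rec_computable 1 (\<lambda>ys. f (ys ! 0))" "rec_computable n k" "rec_computable n g"
  shows "rec_computable n (\<lambda>xs. (f ^^ (k xs)) (g xs))"
proof -
  have "rec_computable 2 (\<lambda>ys. (\<lambda>z a. f z) (ys ! 0) (ys ! 1))"
    using rec_computable_compose1[OF assms(1) rec_computable_proj[of 0 2]] by simp
  from rec_computable_funpow_param[OF this assms(2,3) assms(3)] show ?thesis by simp
qed

lemma rec_computable_pred_unary: "rec_computable 1 (\<lambda>ys. ys ! 0 - 1)"
proof -
  have "rec_computable 1 (\<lambda>xs. rec_nat 0 (\<lambda>k y. k) (hd xs))"
    using rec_computable_rec_nat[OF rec_computable_const[of 0 0]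
        rec_computable_proj[of 1 "Suc (Suc 0)"]] by simp
  then show ?thesis
  proof (rule rec_computable_cong)
    show "rec_nat 0 (\<lambda>k y. k) (hd xs) = xs ! 0 - 1" if "length xs = 1" for xs :: "nat list"
      using that by (cases "hd xs") (auto simp: length_Suc_conv)
  qed
qed

lemma rec_computable_plus:
  "rec_computable n g \<Longrightarrow> rec_computable n h \<Longrightarrow> rec_computable n (\<lambda>xs. g xs + h xs)"
proof -
  have "(Suc ^^ k) x = x + k" for k x by (induction k) auto
  then show "rec_computable n g \<Longrightarrow> rec_computable n h \<Longrightarrow> ?thesis"
    using rec_computable_funpow[OF rec_computable_Suc_unary, of n h g] by (simp add: add.commute)
qed

lemma rec_computable_minus:
  "rec_computable n g \<Longrightarrow> rec_computable n h \<Longrightarrow> rec_computable n (\<lambda>xs. g xs - h xs)"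
proof -
  have "((\<lambda>z. z - 1) ^^ k) x = x - k" for k x :: nat by (induction k) auto
  then show "rec_computable n g \<Longrightarrow> rec_computable n h \<Longrightarrow> ?thesis"
    using rec_computable_funpow[OF rec_computable_pred_unary, of n h g] by simp
qed

lemma rec_computable_times:
  "rec_computable n g \<Longrightarrow> rec_computable n h \<Longrightarrow> rec_computable n (\<lambda>xs. g xs * h xs)"
proof -
  have plus: "rec_computable 2 (\<lambda>ys. ys ! 0 + ys ! 1)"
    by (intro rec_computable_plus rec_computable_proj) simp_all
  have "((\<lambda>z. z + a) ^^ k) 0 = a * k" for a k :: nat by (induction k) auto
  then show "rec_computable n g \<Longrightarrow> rec_computable n h \<Longrightarrow> ?thesis"
    using rec_computable_funpow_param[OF plus _ rec_computable_const[of n 0], of h g] by simp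
qed

lemma rec_computable_if_zero:
  assumes "rec_computable n c" "rec_computable n a" "rec_computable n b"
  shows "rec_computable n (\<lambda>xs. if c xs = 0 then a xs else b xs)"
proof -
  have "rec_computable n (\<lambda>xs. a xs * (1 - c xs) + b xs * (1 - (1 - c xs)))"
    by (intro rec_computable_plus rec_computable_times rec_computable_minus
        assms rec_computable_const)
  then show ?thesis by (rule rec_computable_cong) auto
qed

lemma rec_computable_if_le:
  "rec_computable n g \<Longrightarrow> rec_computable n h \<Longrightarrow> rec_computable n a \<Longrightarrow> rec_computable n b \<Longrightarrow>
   rec_computable n (\<lambda>xs. if g xs \<le> h xs then a xs else b xs)"
  using rec_computable_if_zero[OF rec_computable_minus, of n g h a b] by simp

lemma rec_computable_if_eq:
  assumes "rec_computable n g" "rec_computable n h" "rec_computable n a" "rec_computable n b"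
  shows "rec_computable n (\<lambda>xs. if g xs = h xs then a xs else b xs)"
proof -
  have "rec_computable n (\<lambda>xs. if (g xs - h xs) + (h xs - g xs) = 0 then a xs else b xs)"
    by (intro rec_computable_if_zero rec_computable_plus rec_computable_minus assms)
  then show ?thesis by (rule rec_computable_cong) auto
qed

lemmas rec_computable_arith = rec_computable_const rec_computable_proj rec_computable_Suc
  rec_computable_plus rec_computable_minus rec_computable_times
  rec_computable_if_le rec_computable_if_eq

lemma rec_computable_div2: "rec_computable n g \<Longrightarrow> rec_computable n (\<lambda>xs. g xs div 2)"
proof -
  let ?test = "\<lambda>ys. if Suc (ys ! 1) \<le> 2 * ys ! 0 + 2 then 0 else 1 :: nat"
  have test: "rec_computable (Suc 1) ?test"
    by (intro rec_computable_arith) simp_all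
  have ex: "\<exists>k. ?test (k # xs) = 0" for xs :: "nat list"
    by (rule exI[of _ "xs ! 0"]) simp
  have "rec_computable 1 (\<lambda>xs. LEAST k. ?test (k # xs) = 0)"
    using rec_computable_Least[of 1 ?test] test ex by blast
  moreover have "(LEAST k. ?test (k # xs) = 0) = xs ! 0 div 2" for xs
    by (rule Least_equality) (auto split: if_splits)
  ultimately have "rec_computable 1 (\<lambda>xs. xs ! 0 div 2)" by simp
  then show "rec_computable n g \<Longrightarrow> ?thesis" by (rule rec_computable_compose1)
qed

lemma rec_computable_mod2:
  assumes "rec_computable n g" shows "rec_computable n (\<lambda>xs. g xs mod 2)"
proof -
  have "rec_computable n (\<lambda>xs. g xs - 2 * (g xs div 2))"
    by (intro rec_computable_minus rec_computable_times rec_computable_const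
        rec_computable_div2 assms)
  then show ?thesis by (simp add: minus_mult_div_eq_mod)
qed

lemma computable3_iff_rec_computable:
  "computable3 f \<longleftrightarrow> rec_computable 3 (\<lambda>ys. f (ys ! 0) (ys ! 1) (ys ! 2))"
proof -
  have "(\<forall>x y z. rec_eval c [x, y, z] (f x y z)) \<longleftrightarrow>
        computes c 3 (\<lambda>ys. f (ys ! 0) (ys ! 1) (ys ! 2))" for c
    unfolding computes_def
    by (auto simp: length_Suc_conv numeral_3_eq_3 dest: spec[of _ "[_, _, _]"])
  then show ?thesis unfolding computable3_def rec_computable_def by simp
qed

section \<open>Computable coding of pairs and lists\<close>

definition npair :: "nat \<Rightarrow> nat \<Rightarrow> nat" where "npair a b = prod_encode (a, b)"
definition nfst :: "nat \<Rightarrow> nat" where "nfst z = fst (prod_decode z)"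
definition nsnd :: "nat \<Rightarrow> nat" where "nsnd z = snd (prod_decode z)"

lemma nfst_npair [simp]: "nfst (npair a b) = a" and nsnd_npair [simp]: "nsnd (npair a b) = b"
  by (simp_all add: nfst_def nsnd_def npair_def)

lemma rec_computable_triangle:
  assumes "rec_computable n g" shows "rec_computable n (\<lambda>xs. triangle (g xs))"
proof -
  have "rec_computable 1 (\<lambda>xs. rec_nat 0 (\<lambda>k y. y + Suc k) (hd xs))"
    using rec_computable_rec_nat[OF rec_computable_const[of 0 0],
        of "\<lambda>ys. ys ! 0 + Suc (ys ! 1)"]
    by (simp add: rec_computable_arith)
  moreover have "rec_nat 0 (\<lambda>k y. y + Suc k) m = triangle m" for m
    by (induction m) auto
  ultimately have "rec_computable 1 (\<lambda>xs. triangle (xs ! 0))"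
    by (auto elim!: rec_computable_cong simp: length_Suc_conv)
  then show ?thesis using assms by (rule rec_computable_compose1)
qed

lemma rec_computable_npair:
  assumes "rec_computable n g" "rec_computable n h"
  shows "rec_computable n (\<lambda>xs. npair (g xs) (h xs))"
proof -
  have "rec_computable n (\<lambda>xs. triangle (g xs + h xs) + g xs)"
    by (intro rec_computable_plus rec_computable_triangle assms)
  then show ?thesis by (simp add: npair_def prod_encode_def)
qed

lemma le_triangle: "n \<le> triangle n"
  by (induction n) auto

definition cantor_diagonal :: "nat \<Rightarrow> nat" where
  "cantor_diagonal z = (LEAST k. z < triangle (Suc k))"

lemma prod_decode_cantor_diagonal:
  "prod_decode z = (z - triangle (cantor_diagonal z),
                    cantor_diagonal z - (z - triangle (cantor_diagonal z)))"
proof -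
  define k where "k = cantor_diagonal z"
  have "z < triangle (Suc z)" using le_triangle[of "Suc z"] by simp
  then have lt: "z < triangle (Suc k)" unfolding k_def cantor_diagonal_def by (rule LeastI)
  have ge: "triangle k \<le> z"
  proof (cases k)
    case (Suc j)
    then have "\<not> z < triangle (Suc j)"
      using not_less_Least[of j "\<lambda>k. z < triangle (Suc k)"] lessI
      unfolding k_def cantor_diagonal_def by metis
    then show ?thesis using Suc by simp
  qed simp
  with lt have "prod_encode (z - triangle k, k - (z - triangle k)) = z"
    unfolding prod_encode_def by simp
  then show ?thesis unfolding k_def by (metis prod_encode_inverse)
qed

lemma rec_computable_cantor_diagonal:
  assumes "rec_computable n g" shows "rec_computable n (\<lambda>xs. cantor_diagonal (g xs))"
proof -
  let ?test = "\<lambda>ys. Suc (ys ! 1) - triangle (Suc (ys ! 0))"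
  have test: "rec_computable (Suc 1) ?test"
    by (intro rec_computable_arith rec_computable_triangle) simp_all
  have ex: "\<exists>k. ?test (k # xs) = 0" for xs :: "nat list"
    using le_triangle[of "xs ! 0"] by (intro exI[of _ "xs ! 0"]) simp
  have "rec_computable 1 (\<lambda>xs. LEAST k. ?test (k # xs) = 0)"
    using rec_computable_Least[of 1 ?test] test ex by blast
  then have "rec_computable 1 (\<lambda>xs. cantor_diagonal (xs ! 0))"
    by (simp add: cantor_diagonal_def less_Suc_eq_le)
  then show ?thesis using assms by (rule rec_computable_compose1)
qed

lemma rec_computable_nfst: "rec_computable n g \<Longrightarrow> rec_computable n (\<lambda>xs. nfst (g xs))"
  by (simp add: nfst_def prod_decode_cantor_diagonal rec_computable_arith
      rec_computable_triangle rec_computable_cantor_diagonal)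

lemma rec_computable_nsnd: "rec_computable n g \<Longrightarrow> rec_computable n (\<lambda>xs. nsnd (g xs))"
  by (simp add: nsnd_def prod_decode_cantor_diagonal rec_computable_arith
      rec_computable_triangle rec_computable_cantor_diagonal)

definition ncons :: "nat \<Rightarrow> nat \<Rightarrow> nat" where "ncons x l = Suc (npair x l)"
definition nhd :: "nat \<Rightarrow> nat" where "nhd l = nfst (l - 1)"
definition ntl :: "nat \<Rightarrow> nat" where "ntl l = nsnd (l - 1)"
definition nnth :: "nat \<Rightarrow> nat \<Rightarrow> nat" where "nnth i l = nhd ((ntl ^^ i) l)"

lemma list_encode_Cons: "list_encode (x # xs) = ncons x (list_encode xs)"
  by (simp add: ncons_def npair_def)

declare list_encode.simps(2) [simp del]

lemma nhd_list_encode [simp]: "nhd (list_encode (x # xs)) = x"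
  and ntl_list_encode [simp]: "ntl (list_encode (x # xs)) = list_encode xs"
  by (simp_all add: list_encode_Cons nhd_def ntl_def ncons_def)

lemma list_encode_Cons_neq_0 [simp]: "list_encode (x # xs) \<noteq> 0"
  by (simp add: list_encode_Cons ncons_def)

lemma nnth_list_encode: "i < length xs \<Longrightarrow> nnth i (list_encode xs) = xs ! i"
  by (induction xs arbitrary: i)
    (auto simp: nnth_def funpow_Suc_right less_Suc_eq_0_disj simp del: funpow.simps)

lemma rec_computable_ncons:
  "rec_computable n g \<Longrightarrow> rec_computable n h \<Longrightarrow> rec_computable n (\<lambda>xs. ncons (g xs) (h xs))"
  unfolding ncons_def by (intro rec_computable_Suc rec_computable_npair)

lemma rec_computable_nhd: "rec_computable n g \<Longrightarrow> rec_computable n (\<lambda>xs. nhd (g xs))"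
  unfolding nhd_def by (intro rec_computable_nfst rec_computable_minus rec_computable_const)

lemma rec_computable_ntl: "rec_computable n g \<Longrightarrow> rec_computable n (\<lambda>xs. ntl (g xs))"
  unfolding ntl_def by (intro rec_computable_nsnd rec_computable_minus rec_computable_const)

lemma rec_computable_nnth:
  assumes "rec_computable n g" "rec_computable n h"
  shows "rec_computable n (\<lambda>xs. nnth (g xs) (h xs))"
proof -
  have "rec_computable 1 (\<lambda>ys. ntl (ys ! 0))" by (intro rec_computable_ntl rec_computable_proj) simp
  from rec_computable_funpow[OF this assms] show ?thesis
    unfolding nnth_def by (rule rec_computable_nhd)
qed

lemmas rec_computable_intros = rec_computable_arith rec_computable_npair rec_computable_nfst
  rec_computable_nsnd rec_computable_ncons rec_computable_nhd rec_computable_ntl rec_computable_nnth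

section \<open>A universal machine\<close>

fun recf_code :: "recf \<Rightarrow> nat" where
  "recf_code RZ = npair 0 0"
| "recf_code RS = npair 1 0"
| "recf_code (RProj i) = npair 2 i"
| "recf_code (RComp f gs) = npair 3 (npair (recf_code f) (list_encode (map recf_code (rev gs))))"
| "recf_code (RPrim f g) = npair 4 (npair (recf_code f) (recf_code g))"
| "recf_code (RMn f) = npair 5 (recf_code f)"

text \<open>A configuration of the machine is a stack of pending frames together with a stack of
  computed values; the machine has halted when the frame stack is empty. The frame Eval c xs
  pushes the value of program c on the arguments xs; CompArgs f gs xs acc evaluates the
  remaining argument programs gs (stored in reverse) on xs, with acc the values obtained so far,
  and CompCollect moves the latest value into acc; PrimStep g xs feeds the value of a recursive
  call to g; MuLoop f k xs tests the candidate k and MuCheck f k xs inspects the outcome.\<close>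

definition Eval :: "nat \<Rightarrow> nat \<Rightarrow> nat" where
  "Eval c xs = npair 0 (npair c xs)"
definition CompArgs :: "nat \<Rightarrow> nat \<Rightarrow> nat \<Rightarrow> nat \<Rightarrow> nat" where
  "CompArgs f gs xs acc = npair 1 (npair f (npair gs (npair xs acc)))"
definition CompCollect :: "nat \<Rightarrow> nat \<Rightarrow> nat \<Rightarrow> nat \<Rightarrow> nat" where
  "CompCollect f gs xs acc = npair 2 (npair f (npair gs (npair xs acc)))"
definition PrimStep :: "nat \<Rightarrow> nat \<Rightarrow> nat" where
  "PrimStep g xs = npair 3 (npair g xs)"
definition MuLoop :: "nat \<Rightarrow> nat \<Rightarrow> nat \<Rightarrow> nat" where
  "MuLoop f k xs = npair 4 (npair f (npair k xs))"
definition MuCheck :: "nat \<Rightarrow> nat \<Rightarrow> nat \<Rightarrow> nat" where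
  "MuCheck f k xs = npair 5 (npair f (npair k xs))"

definition config :: "nat list \<Rightarrow> nat list \<Rightarrow> nat" where
  "config ts vs = npair (list_encode ts) (list_encode vs)"

definition step_Eval :: "nat \<Rightarrow> nat \<Rightarrow> nat \<Rightarrow> nat \<Rightarrow> nat" where
  "step_Eval c xs ts vs =
    (if nfst c = 0 then npair ts (ncons 0 vs)
     else if nfst c = 1 then npair ts (ncons (Suc (nhd xs)) vs)
     else if nfst c = 2 then npair ts (ncons (nnth (nsnd c) xs) vs)
     else if nfst c = 3 then npair (ncons (CompArgs (nfst (nsnd c)) (nsnd (nsnd c)) xs 0) ts) vs
     else if nfst c = 4 then
       (if nhd xs = 0 then npair (ncons (Eval (nfst (nsnd c)) (ntl xs)) ts) vs
        else npair (ncons (Eval c (ncons (nhd xs - 1) (ntl xs)))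
                     (ncons (PrimStep (nsnd (nsnd c)) (ncons (nhd xs - 1) (ntl xs))) ts)) vs)
     else npair (ncons (MuLoop (nsnd c) 0 xs) ts) vs)"

definition step_CompArgs :: "nat \<Rightarrow> nat \<Rightarrow> nat \<Rightarrow> nat \<Rightarrow> nat \<Rightarrow> nat \<Rightarrow> nat" where
  "step_CompArgs f gs xs acc ts vs =
    (if gs = 0 then npair (ncons (Eval f acc) ts) vs
     else npair (ncons (Eval (nhd gs) xs) (ncons (CompCollect f (ntl gs) xs acc) ts)) vs)"

definition step_CompCollect :: "nat \<Rightarrow> nat \<Rightarrow> nat \<Rightarrow> nat \<Rightarrow> nat \<Rightarrow> nat \<Rightarrow> nat" where
  "step_CompCollect f gs xs acc ts vs =
    npair (ncons (CompArgs f gs xs (ncons (nhd vs) acc)) ts) (ntl vs)"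

definition step_PrimStep :: "nat \<Rightarrow> nat \<Rightarrow> nat \<Rightarrow> nat \<Rightarrow> nat" where
  "step_PrimStep g xs ts vs = npair (ncons (Eval g (ncons (nhd vs) xs)) ts) (ntl vs)"

definition step_MuLoop :: "nat \<Rightarrow> nat \<Rightarrow> nat \<Rightarrow> nat \<Rightarrow> nat \<Rightarrow> nat" where
  "step_MuLoop f k xs ts vs = npair (ncons (Eval f (ncons k xs)) (ncons (MuCheck f k xs) ts)) vs"

definition step_MuCheck :: "nat \<Rightarrow> nat \<Rightarrow> nat \<Rightarrow> nat \<Rightarrow> nat \<Rightarrow> nat" where
  "step_MuCheck f k xs ts vs =
    (if nhd vs = 0 then npair ts (ncons k (ntl vs))
     else npair (ncons (MuLoop f (Suc k) xs) ts) (ntl vs))"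

definition step_frame :: "nat \<Rightarrow> nat \<Rightarrow> nat \<Rightarrow> nat" where
  "step_frame t ts vs =
    (let a = nsnd t in
     if nfst t = 0 then step_Eval (nfst a) (nsnd a) ts vs
     else if nfst t = 1 then
       step_CompArgs (nfst a) (nfst (nsnd a)) (nfst (nsnd (nsnd a))) (nsnd (nsnd (nsnd a))) ts vs
     else if nfst t = 2 then
       step_CompCollect (nfst a) (nfst (nsnd a)) (nfst (nsnd (nsnd a))) (nsnd (nsnd (nsnd a))) ts vs
     else if nfst t = 3 then step_PrimStep (nfst a) (nsnd a) ts vs
     else if nfst t = 4 then step_MuLoop (nfst a) (nfst (nsnd a)) (nsnd (nsnd a)) ts vs
     else step_MuCheck (nfst a) (nfst (nsnd a)) (nsnd (nsnd a)) ts vs)"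

definition step :: "nat \<Rightarrow> nat" where
  "step st = (if nfst st = 0 then st else step_frame (nhd (nfst st)) (ntl (nfst st)) (nsnd st))"

lemma rec_computable_step: "rec_computable n g \<Longrightarrow> rec_computable n (\<lambda>xs. step (g xs))"
  unfolding step_def step_frame_def Let_def step_Eval_def step_CompArgs_def step_CompCollect_def
    step_PrimStep_def step_MuLoop_def step_MuCheck_def
    Eval_def CompArgs_def CompCollect_def PrimStep_def MuLoop_def MuCheck_def
  by (intro rec_computable_intros)

definition reaches :: "nat \<Rightarrow> nat \<Rightarrow> bool" where
  "reaches s s' \<longleftrightarrow> (\<exists>n. (step ^^ n) s = s')"

lemma reaches_refl: "reaches s s"
  unfolding reaches_def by (metis funpow_0)

lemma reaches_trans [trans]: "reaches s s' \<Longrightarrow> reaches s' s'' \<Longrightarrow> reaches s s''"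
  unfolding reaches_def by (metis funpow_add comp_apply)

lemma reaches_step: "step s = s' \<Longrightarrow> reaches s s'"
  unfolding reaches_def by (intro exI[of _ 1]) simp

lemma step_config: "step (config (t # ts) vs) = step_frame t (list_encode ts) (list_encode vs)"
  by (simp add: step_def config_def list_encode_Cons ncons_def nhd_def ntl_def)

lemmas step_frame_simps = step_frame_def Let_def step_Eval_def step_CompArgs_def
  step_CompCollect_def step_PrimStep_def step_MuLoop_def step_MuCheck_def
  Eval_def CompArgs_def CompCollect_def PrimStep_def MuLoop_def MuCheck_def
  config_def list_encode_Cons[symmetric]

lemma step_Eval_RZ:
  "step (config (Eval (recf_code RZ) (list_encode xs) # ts) vs) = config ts (0 # vs)"
  unfolding step_config by (simp add: step_frame_simps)

lemma step_Eval_RS: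
  "step (config (Eval (recf_code RS) (list_encode (x # xs)) # ts) vs) = config ts (Suc x # vs)"
  unfolding step_config by (simp add: step_frame_simps)

lemma step_Eval_RProj:
  "i < length xs \<Longrightarrow>
   step (config (Eval (recf_code (RProj i)) (list_encode xs) # ts) vs) = config ts (xs ! i # vs)"
  unfolding step_config by (simp add: step_frame_simps nnth_list_encode)

lemma step_Eval_RComp:
  "step (config (Eval (recf_code (RComp f gs)) (list_encode xs) # ts) vs) =
   config (CompArgs (recf_code f) (list_encode (map recf_code (rev gs))) (list_encode xs)
             (list_encode []) # ts) vs"
  unfolding step_config by (simp add: step_frame_simps)

lemma step_CompArgs_Nil:
  "step (config (CompArgs f (list_encode []) xs acc # ts) vs) = config (Eval f acc # ts) vs"
  unfolding step_config by (simp add: step_frame_simps)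

lemma step_CompArgs_Cons:
  "step (config (CompArgs f (list_encode (g # gs)) xs acc # ts) vs) =
   config (Eval g xs # CompCollect f (list_encode gs) xs acc # ts) vs"
  unfolding step_config by (simp add: step_frame_simps)

lemma step_CompCollect:
  "step (config (CompCollect f gs xs (list_encode acc) # ts) (v # vs)) =
   config (CompArgs f gs xs (list_encode (v # acc)) # ts) vs"
  unfolding step_config by (simp add: step_frame_simps)

lemma step_Eval_RPrim_0:
  "step (config (Eval (recf_code (RPrim f g)) (list_encode (0 # xs)) # ts) vs) =
   config (Eval (recf_code f) (list_encode xs) # ts) vs"
  unfolding step_config by (simp add: step_frame_simps)

lemma step_Eval_RPrim_Suc:
  "step (config (Eval (recf_code (RPrim f g)) (list_encode (Suc n # xs)) # ts) vs) =
   config (Eval (recf_code (RPrim f g)) (list_encode (n # xs)) #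
           PrimStep (recf_code g) (list_encode (n # xs)) # ts) vs"
  unfolding step_config by (simp add: step_frame_simps)

lemma step_PrimStep:
  "step (config (PrimStep g (list_encode xs) # ts) (y # vs)) =
   config (Eval g (list_encode (y # xs)) # ts) vs"
  unfolding step_config by (simp add: step_frame_simps)

lemma step_Eval_RMn:
  "step (config (Eval (recf_code (RMn f)) (list_encode xs) # ts) vs) =
   config (MuLoop (recf_code f) 0 (list_encode xs) # ts) vs"
  unfolding step_config by (simp add: step_frame_simps)

lemma step_MuLoop:
  "step (config (MuLoop f k (list_encode xs) # ts) vs) =
   config (Eval f (list_encode (k # xs)) # MuCheck f k (list_encode xs) # ts) vs"
  unfolding step_config by (simp add: step_frame_simps)

lemma step_MuCheck_0: "step (config (MuCheck f k xs # ts) (0 # vs)) = config ts (k # vs)"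
  unfolding step_config by (simp add: step_frame_simps)

lemma step_MuCheck_Suc:
  "step (config (MuCheck f k xs # ts) (Suc y # vs)) = config (MuLoop f (Suc k) xs # ts) vs"
  unfolding step_config by (simp add: step_frame_simps)

abbreviation evaluates :: "nat \<Rightarrow> nat \<Rightarrow> nat \<Rightarrow> bool" where
  "evaluates c xs y \<equiv> \<forall>ts vs. reaches (config (Eval c xs # ts) vs) (config ts (y # vs))"

lemma reaches_CompArgs:
  assumes "list_all2 (\<lambda>g y. evaluates (recf_code g) xs y) gs ys"
  shows "reaches (config (CompArgs f (list_encode (map recf_code (rev gs))) xs (list_encode acc) # ts) vs)
                 (config (CompArgs f (list_encode []) xs (list_encode (ys @ acc)) # ts) vs)"
  using assms
proof (induction gs arbitrary: ys acc rule: rev_induct)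
  case Nil
  then show ?case by (simp add: reaches_refl)
next
  case (snoc g gs)
  from snoc.prems obtain ys0 y where ys: "ys = ys0 @ [y]"
    and IH_args: "list_all2 (\<lambda>g y. evaluates (recf_code g) xs y) gs ys0"
    and g: "evaluates (recf_code g) xs y"
    by (auto simp: list_all2_append1 list_all2_Cons1)
  let ?gs = "list_encode (map recf_code (rev gs))"
  have "reaches (config (CompArgs f (list_encode (map recf_code (rev (gs @ [g])))) xs (list_encode acc) # ts) vs)
                (config (Eval (recf_code g) xs # CompCollect f ?gs xs (list_encode acc) # ts) vs)"
    by (simp add: reaches_step step_CompArgs_Cons)
  also have "reaches \<dots> (config (CompCollect f ?gs xs (list_encode acc) # ts) (y # vs))"
    using g by blast
  also have "reaches \<dots> (config (CompArgs f ?gs xs (list_encode (y # acc)) # ts) vs)"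
    by (rule reaches_step[OF step_CompCollect])
  also have "reaches \<dots> (config (CompArgs f (list_encode []) xs (list_encode (ys0 @ y # acc)) # ts) vs)"
    using snoc.IH[OF IH_args] .
  finally show ?case using ys by simp
qed

lemma reaches_MuLoop:
  assumes "\<forall>k<n. \<exists>y. evaluates (recf_code f) (list_encode (k # xs)) (Suc y)" and "m \<le> n"
  shows "reaches (config (MuLoop (recf_code f) 0 (list_encode xs) # ts) vs)
                 (config (MuLoop (recf_code f) m (list_encode xs) # ts) vs)"
  using \<open>m \<le> n\<close>
proof (induction m)
  case 0
  show ?case by (rule reaches_refl)
next
  case (Suc m)
  then obtain y where y: "evaluates (recf_code f) (list_encode (m # xs)) (Suc y)"
    using assms(1) Suc_le_lessD by blast
  have "reaches (config (MuLoop (recf_code f) 0 (list_encode xs) # ts) vs)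
                (config (MuLoop (recf_code f) m (list_encode xs) # ts) vs)"
    using Suc by simp
  also have "reaches \<dots> (config (Eval (recf_code f) (list_encode (m # xs)) #
                                  MuCheck (recf_code f) m (list_encode xs) # ts) vs)"
    by (rule reaches_step[OF step_MuLoop])
  also have "reaches \<dots> (config (MuCheck (recf_code f) m (list_encode xs) # ts) (Suc y # vs))"
    using y by blast
  also have "reaches \<dots> (config (MuLoop (recf_code f) (Suc m) (list_encode xs) # ts) vs)"
    by (rule reaches_step[OF step_MuCheck_Suc])
  finally show ?case .
qed

lemma evaluates_RComp:
  assumes args: "list_all2 (\<lambda>g y. evaluates (recf_code g) (list_encode xs) y) gs ys"
    and f: "evaluates (recf_code f) (list_encode ys) z"
  shows "evaluates (recf_code (RComp f gs)) (list_encode xs) z"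
proof (intro allI)
  fix ts vs
  have "reaches (config (Eval (recf_code (RComp f gs)) (list_encode xs) # ts) vs)
     (config (CompArgs (recf_code f) (list_encode (map recf_code (rev gs))) (list_encode xs)
                (list_encode []) # ts) vs)"
    by (rule reaches_step[OF step_Eval_RComp])
  also have "reaches \<dots> (config (CompArgs (recf_code f) (list_encode []) (list_encode xs)
                                   (list_encode (ys @ [])) # ts) vs)"
    by (rule reaches_CompArgs[OF args])
  also have "reaches \<dots> (config (Eval (recf_code f) (list_encode ys) # ts) vs)"
    using reaches_step[OF step_CompArgs_Nil] by simp
  also have "reaches \<dots> (config ts (z # vs))" using f by blast
  finally show "reaches (config (Eval (recf_code (RComp f gs)) (list_encode xs) # ts) vs)
                        (config ts (z # vs))" .
qed

lemma evaluates_RPrim_Suc: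
  assumes rec: "evaluates (recf_code (RPrim f g)) (list_encode (n # xs)) y"
    and g: "evaluates (recf_code g) (list_encode (y # n # xs)) z"
  shows "evaluates (recf_code (RPrim f g)) (list_encode (Suc n # xs)) z"
proof (intro allI)
  fix ts vs
  have "reaches (config (Eval (recf_code (RPrim f g)) (list_encode (Suc n # xs)) # ts) vs)
     (config (Eval (recf_code (RPrim f g)) (list_encode (n # xs)) #
              PrimStep (recf_code g) (list_encode (n # xs)) # ts) vs)"
    by (rule reaches_step[OF step_Eval_RPrim_Suc])
  also have "reaches \<dots> (config (PrimStep (recf_code g) (list_encode (n # xs)) # ts) (y # vs))"
    using rec by blast
  also have "reaches \<dots> (config (Eval (recf_code g) (list_encode (y # n # xs)) # ts) vs)"
    by (rule reaches_step[OF step_PrimStep])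
  also have "reaches \<dots> (config ts (z # vs))" using g by blast
  finally show "reaches (config (Eval (recf_code (RPrim f g)) (list_encode (Suc n # xs)) # ts) vs)
                        (config ts (z # vs))" .
qed

lemma evaluates_RMn:
  assumes zero: "evaluates (recf_code f) (list_encode (n # xs)) 0"
    and below: "\<forall>k<n. \<exists>y. evaluates (recf_code f) (list_encode (k # xs)) (Suc y)"
  shows "evaluates (recf_code (RMn f)) (list_encode xs) n"
proof (intro allI)
  fix ts vs
  have "reaches (config (Eval (recf_code (RMn f)) (list_encode xs) # ts) vs)
                (config (MuLoop (recf_code f) 0 (list_encode xs) # ts) vs)"
    by (rule reaches_step[OF step_Eval_RMn])
  also have "reaches \<dots> (config (MuLoop (recf_code f) n (list_encode xs) # ts) vs)"
    using below by (rule reaches_MuLoop) simp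
  also have "reaches \<dots> (config (Eval (recf_code f) (list_encode (n # xs)) #
                                  MuCheck (recf_code f) n (list_encode xs) # ts) vs)"
    by (rule reaches_step[OF step_MuLoop])
  also have "reaches \<dots> (config (MuCheck (recf_code f) n (list_encode xs) # ts) (0 # vs))"
    using zero by blast
  also have "reaches \<dots> (config ts (n # vs))"
    by (rule reaches_step[OF step_MuCheck_0])
  finally show "reaches (config (Eval (recf_code (RMn f)) (list_encode xs) # ts) vs)
                        (config ts (n # vs))" .
qed

theorem evaluates_if_rec_eval:
  "rec_eval c xs y \<Longrightarrow> evaluates (recf_code c) (list_encode xs) y"
proof (induction rule: rec_eval.induct)
  case (comp xs gs ys f z)
  from comp.IH(1) have "list_all2 (\<lambda>g y. evaluates (recf_code g) (list_encode xs) y) gs ys"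
    by (rule list_all2_mono) blast
  then show ?case using comp.IH(2) by (rule evaluates_RComp)
next
  case (primS f g n xs y z)
  then show ?case by (intro evaluates_RPrim_Suc)
next
  case (mn f n xs)
  then show ?case by (intro evaluates_RMn) blast+
qed (blast intro: reaches_trans reaches_step step_Eval_RZ step_Eval_RS step_Eval_RProj
        step_Eval_RPrim_0)+

text \<open>run c a s is Suc y if program c, started on the arguments [a, 0], has halted with
  output y within s steps, and 0 otherwise.\<close>
definition run :: "nat \<Rightarrow> nat \<Rightarrow> nat \<Rightarrow> nat" where
  "run c a s =
    (let st = (step ^^ s) (config [Eval c (list_encode [a, 0])] [])
     in if nfst st = 0 then Suc (nhd (nsnd st)) else 0)"

lemma rec_computable_run:
  assumes "rec_computable n c" "rec_computable n a" "rec_computable n s"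
  shows "rec_computable n (\<lambda>xs. run (c xs) (a xs) (s xs))"
proof -
  have step: "rec_computable 1 (\<lambda>ys. step (ys ! 0))"
    by (intro rec_computable_step rec_computable_proj) simp
  have init: "rec_computable n (\<lambda>xs. config [Eval (c xs) (list_encode [a xs, 0])] [])"
    unfolding config_def Eval_def list_encode_Cons list_encode.simps(1)
    by (intro rec_computable_intros assms)
  have "rec_computable n
          (\<lambda>xs. (step ^^ s xs) (config [Eval (c xs) (list_encode [a xs, 0])] []))"
    using rec_computable_funpow[OF step assms(3) init] .
  then show ?thesis
    unfolding run_def Let_def by (intro rec_computable_intros)
qed

lemma funpow_step_halted:
  assumes "nfst st = 0" shows "(step ^^ k) st = st"
proof -
  have "step st = st" using assms by (simp add: step_def)
  then show ?thesis by (induction k) simp_all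
qed

lemma run_stable:
  assumes "run c a s \<noteq> 0" "s \<le> s'" shows "run c a s' = run c a s"
proof -
  let ?init = "config [Eval c (list_encode [a, 0])] []"
  have halted: "nfst ((step ^^ s) ?init) = 0"
    using assms(1) unfolding run_def Let_def by (rule contrapos_np) simp
  have "(step ^^ s') ?init = (step ^^ (s' - s) \<circ> step ^^ s) ?init"
    using assms(2) by (simp flip: funpow_add)
  also have "\<dots> = (step ^^ s) ?init"
    using halted by (simp add: funpow_step_halted)
  finally show ?thesis unfolding run_def by simp
qed

lemma run_eventually_eq:
  assumes "rec_eval c [a, 0] y" shows "\<exists>n. \<forall>s\<ge>n. run (recf_code c) a s = Suc y"
proof -
  have "reaches (config [Eval (recf_code c) (list_encode [a, 0])] []) (config [] [y])"
    using evaluates_if_rec_eval[OF assms] by blast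
  then obtain n where "(step ^^ n) (config [Eval (recf_code c) (list_encode [a, 0])] []) =
                       config [] [y]"
    unfolding reaches_def by blast
  then have "run (recf_code c) a n = Suc y"
    unfolding run_def Let_def by (simp add: config_def)
  then show ?thesis using run_stable[of "recf_code c" a n] by auto
qed

section \<open>Ultrametrics given by weights\<close>

definition max_weight_dist :: "('a \<Rightarrow> real) \<Rightarrow> 'a \<Rightarrow> 'a \<Rightarrow> real" where
  "max_weight_dist w x y = (if x = y then 0 else max (w x) (w y))"

lemma Metric_space_max_weight_dist:
  assumes "\<And>x. 0 < w x" shows "Metric_space A (max_weight_dist w)"
proof
  fix x y z
  show "0 \<le> max_weight_dist w x y" "max_weight_dist w x y = max_weight_dist w y x"
    using assms[of x] by (auto simp: max_weight_dist_def max.commute)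
  show "max_weight_dist w x y = 0 \<longleftrightarrow> x = y"
    using assms[of x] by (auto simp: max_weight_dist_def max_def)
  have "max (w x) (w z) \<le> max (w x) (w y) + max (w y) (w z)"
    using assms[of x] assms[of y] assms[of z] by linarith
  then show "max_weight_dist w x z \<le> max_weight_dist w x y + max_weight_dist w y z"
    using assms[of x] assms[of y] assms[of z] by (auto simp: max_weight_dist_def)
qed

lemma ultrametric_max_weight_dist:
  assumes "\<And>x. 0 \<le> w x" shows "ultrametric A (max_weight_dist w)"
  unfolding ultrametric_def
proof (intro ballI)
  fix x y z
  have "max (w x) (w z) \<le> max (max (w x) (w y)) (max (w y) (w z))"
    by (rule max.mono[OF max.cobounded1 max.cobounded2])
  then show "max_weight_dist w x z \<le> max (max_weight_dist w x y) (max_weight_dist w y z)"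
    using assms[of x] assms[of z] by (auto simp: max_weight_dist_def)
qed

lemma (in Metric_space) mcomplete_if_uniformly_discrete:
  assumes "0 < r" and sep: "\<And>x y. x \<in> M \<Longrightarrow> y \<in> M \<Longrightarrow> x \<noteq> y \<Longrightarrow> r \<le> d x y"
  shows "mcomplete"
  unfolding mcomplete_def
proof (intro allI impI)
  fix \<sigma> :: "nat \<Rightarrow> 'a" assume "MCauchy \<sigma>"
  then obtain N where in_M: "range \<sigma> \<subseteq> M"
    and N: "\<And>n n'. N \<le> n \<Longrightarrow> N \<le> n' \<Longrightarrow> d (\<sigma> n) (\<sigma> n') < r"
    using \<open>0 < r\<close> unfolding MCauchy_def by blast
  have "\<sigma> n = \<sigma> N" if "N \<le> n" for n
  proof (rule ccontr)
    assume "\<sigma> n \<noteq> \<sigma> N"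
    then have "r \<le> d (\<sigma> n) (\<sigma> N)" using sep in_M by blast
    with N[OF that order_refl] show False by linarith
  qed
  then have "eventually (\<lambda>n. \<sigma> n = \<sigma> N) sequentially"
    by (rule eventually_sequentiallyI)
  moreover have "\<sigma> N \<in> topspace mtopology" using in_M by auto
  ultimately have "limitin mtopology \<sigma> (\<sigma> N) sequentially"
    by (intro limitin_eventually)
  then show "\<exists>x. limitin mtopology \<sigma> x sequentially" ..
qed

lemma mcomplete_max_weight_dist:
  assumes "0 < r" "\<And>x. r \<le> w x" shows "Metric_space.mcomplete A (max_weight_dist w)"
proof -
  interpret Metric_space A "max_weight_dist w"
    using assms by (intro Metric_space_max_weight_dist) (meson less_le_trans)
  show ?thesis
    using assms
    by (intro mcomplete_if_uniformly_discrete[of r]) (simp_all add: max_weight_dist_def le_max_iff_disj)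
qed

section \<open>The diagonal ultrametric space\<close>

lemma rat_of_code_0: "rat_of_code 0 = 0"
  by (simp add: rat_of_code_def prod_decode_def prod_decode_aux.simps int_decode_def sum_decode_def)

lemma rat_of_code_npair_even: "rat_of_code (npair (2 * a) b) = real a / real (Suc b)"
  by (simp add: rat_of_code_def npair_def int_decode_def sum_decode_def)

lemma max_0_rat_of_code:
  "max 0 (rat_of_code m) =
   real (if nfst m mod 2 = 0 then nfst m div 2 else 0) / real (Suc (nsnd m))"
proof -
  have m: "prod_decode m = (nfst m, nsnd m)" by (simp add: nfst_def nsnd_def)
  show ?thesis
  proof (cases "nfst m mod 2 = 0")
    case True
    then show ?thesis
      by (simp add: rat_of_code_def m int_decode_def sum_decode_def even_iff_mod_2_eq_zero)
  next
    case False
    then have "int_decode (nfst m) < 0"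
      by (simp add: int_decode_def sum_decode_def even_iff_mod_2_eq_zero)
    then have "rat_of_code m < 0" by (simp add: rat_of_code_def m divide_neg_pos)
    then show ?thesis using False by simp
  qed
qed

text \<open>Program e is run on (2e, 0) and (2e + 1, 0): the first points of Cauchy names for the
  images of 2e and 2e + 1.\<close>

definition both_halt :: "nat \<Rightarrow> nat \<Rightarrow> bool" where
  "both_halt e s \<longleftrightarrow> run e (2 * e) s \<noteq> 0 \<and> run e (2 * e + 1) s \<noteq> 0"

definition guess_code :: "(nat \<Rightarrow> nat \<Rightarrow> nat \<Rightarrow> nat) \<Rightarrow> nat \<Rightarrow> nat \<Rightarrow> nat" where
  "guess_code F e s = F (run e (2 * e) s - 1) (run e (2 * e + 1) s - 1) s"

definition weight_approx :: "(nat \<Rightarrow> nat \<Rightarrow> nat \<Rightarrow> nat) \<Rightarrow> nat \<Rightarrow> nat \<Rightarrow> real" where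
  "weight_approx F e s =
    (if both_halt e s then 3 + max 0 (rat_of_code (guess_code F e s)) else 3)"

definition weight :: "(nat \<Rightarrow> nat \<Rightarrow> nat \<Rightarrow> nat) \<Rightarrow> nat \<Rightarrow> real" where
  "weight F e = lim (weight_approx F e)"

definition diag_dist :: "(nat \<Rightarrow> nat \<Rightarrow> nat \<Rightarrow> nat) \<Rightarrow> real \<Rightarrow> real \<Rightarrow> real" where
  "diag_dist F = max_weight_dist (\<lambda>x. weight F (nat \<lfloor>x\<rfloor> div 2))"

definition weight_num :: "(nat \<Rightarrow> nat \<Rightarrow> nat \<Rightarrow> nat) \<Rightarrow> nat \<Rightarrow> nat \<Rightarrow> nat" where
  "weight_num F e s =
    (if run e (2 * e) s = 0 then 3 else if run e (2 * e + 1) s = 0 then 3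
     else (if nfst (guess_code F e s) mod 2 = 0 then nfst (guess_code F e s) div 2 else 0)
          + 3 * Suc (nsnd (guess_code F e s)))"

definition weight_den :: "(nat \<Rightarrow> nat \<Rightarrow> nat \<Rightarrow> nat) \<Rightarrow> nat \<Rightarrow> nat \<Rightarrow> nat" where
  "weight_den F e s =
    (if run e (2 * e) s = 0 then 0 else if run e (2 * e + 1) s = 0 then 0
     else nsnd (guess_code F e s))"

definition diag_dist_code :: "(nat \<Rightarrow> nat \<Rightarrow> nat \<Rightarrow> nat) \<Rightarrow> nat \<Rightarrow> nat \<Rightarrow> nat \<Rightarrow> nat" where
  "diag_dist_code F i k s =
    (if i = k then 0
     else if weight_num F (i div 2) s * Suc (weight_den F (k div 2) s)
             \<le> weight_num F (k div 2) s * Suc (weight_den F (i div 2) s)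
     then npair (2 * weight_num F (k div 2) s) (weight_den F (k div 2) s)
     else npair (2 * weight_num F (i div 2) s) (weight_den F (i div 2) s))"

lemma diag_dist_of_nat:
  "diag_dist F (real i) (real k) =
   (if i = k then 0 else max (weight F (i div 2)) (weight F (k div 2)))"
  by (simp add: diag_dist_def max_weight_dist_def)

lemma weight_approx_eq_num_den:
  "weight_approx F e s = real (weight_num F e s) / real (Suc (weight_den F e s))"
proof (cases "both_halt e s")
  case True
  then show ?thesis
    by (simp add: weight_approx_def weight_num_def weight_den_def both_halt_def
        max_0_rat_of_code field_simps)
qed (auto simp: weight_approx_def weight_num_def weight_den_def both_halt_def)

lemma rat_of_code_diag_dist_code:
  "rat_of_code (diag_dist_code F i k s) =
   (if i = k then 0 else max (weight_approx F (i div 2) s) (weight_approx F (k div 2) s))"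
proof -
  have le_iff: "real a / real (Suc b) \<le> real c / real (Suc d) \<longleftrightarrow> a * Suc d \<le> c * Suc b"
    for a b c d :: nat
  proof -
    have "real a / real (Suc b) \<le> real c / real (Suc d) \<longleftrightarrow>
          real a * real (Suc d) \<le> real c * real (Suc b)"
      by (simp add: field_simps del: of_nat_Suc)
    then show ?thesis by (simp only: of_nat_mult[symmetric] of_nat_le_iff)
  qed
  show ?thesis
    unfolding diag_dist_code_def weight_approx_eq_num_den le_iff[symmetric]
    by (simp add: rat_of_code_0 rat_of_code_npair_even max_def)
qed

lemma computable3_diag_dist_code:
  assumes "computable3 F" shows "computable3 (diag_dist_code F)"
proof -
  have F: "rec_computable 3 (\<lambda>ys. F (ys ! 0) (ys ! 1) (ys ! 2))"
    using assms by (simp add: computable3_iff_rec_computable)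
  have guess: "rec_computable 3 (\<lambda>xs. guess_code F (a xs) (b xs))"
    if "rec_computable 3 a" "rec_computable 3 b" for a b
    unfolding guess_code_def
    by (intro rec_computable_compose3[OF F] rec_computable_intros rec_computable_run that)
  have num: "rec_computable 3 (\<lambda>xs. weight_num F (a xs) (b xs))"
    and den: "rec_computable 3 (\<lambda>xs. weight_den F (a xs) (b xs))"
    if "rec_computable 3 a" "rec_computable 3 b" for a b
    unfolding weight_num_def weight_den_def
    by (intro rec_computable_intros rec_computable_run rec_computable_div2 rec_computable_mod2
        guess that)+
  have "rec_computable 3 (\<lambda>ys. diag_dist_code F (ys ! 0) (ys ! 1) (ys ! 2))"
    unfolding diag_dist_code_def
    by (intro rec_computable_intros rec_computable_div2 num den; simp)
  then show ?thesis by (simp add: computable3_iff_rec_computable)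
qed

lemma weight_approx_ge: "3 \<le> weight_approx F e s"
  by (simp add: weight_approx_def)

lemma weight_approx_halted:
  assumes "run e (2 * e) n = Suc x" "run e (2 * e + 1) n = Suc y" "n \<le> s"
  shows "weight_approx F e s = 3 + max 0 (rat_of_code (F x y s))"
  using run_stable[OF _ assms(3), of e "2 * e"] run_stable[OF _ assms(3), of e "2 * e + 1"] assms
  by (simp add: weight_approx_def both_halt_def guess_code_def)

locale left_ce_approximation =
  fixes M :: "'a set" and d :: "'a \<Rightarrow> 'a \<Rightarrow> real" and p :: "nat \<Rightarrow> 'a"
    and F :: "nat \<Rightarrow> nat \<Rightarrow> nat \<Rightarrow> nat"
  assumes metric: "Metric_space M d" and points_in: "range p \<subseteq> M"
    and mono_approx: "\<And>i k. mono (\<lambda>s. rat_of_code (F i k s))"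
    and approx_tendsto: "\<And>i k. (\<lambda>s. rat_of_code (F i k s)) \<longlonglongrightarrow> d (p i) (p k)"
begin

lemma mono_weight_approx: "mono (weight_approx F e)"
proof (rule monoI)
  fix s s' :: nat assume "s \<le> s'"
  show "weight_approx F e s \<le> weight_approx F e s'"
  proof (cases "both_halt e s")
    case True
    then obtain x y where "run e (2 * e) s = Suc x" "run e (2 * e + 1) s = Suc y"
      unfolding both_halt_def by (meson not0_implies_Suc)
    moreover have "max 0 (rat_of_code (F x y s)) \<le> max 0 (rat_of_code (F x y s'))"
      using monoD[OF mono_approx \<open>s \<le> s'\<close>] by (rule max.mono[OF order_refl])
    ultimately show ?thesis
      using weight_approx_halted[of e s x y s' F] weight_approx_halted[of e s x y s F] \<open>s \<le> s'\<close>
      by simp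
  next
    case False
    then show ?thesis using weight_approx_ge[of F e s'] by (simp add: weight_approx_def)
  qed
qed

lemma weight_approx_tendsto_dist:
  assumes "run e (2 * e) n = Suc x" "run e (2 * e + 1) n = Suc y"
  shows "weight_approx F e \<longlonglongrightarrow> 3 + d (p x) (p y)"
proof -
  have "(\<lambda>s. 3 + max 0 (rat_of_code (F x y s))) \<longlonglongrightarrow> 3 + max 0 (d (p x) (p y))"
    by (intro tendsto_intros approx_tendsto)
  moreover have "eventually (\<lambda>s. 3 + max 0 (rat_of_code (F x y s)) = weight_approx F e s)
                   sequentially"
    using weight_approx_halted[OF assms] by (intro eventually_sequentiallyI[of n]) simp
  ultimately show ?thesis
    using Metric_space.nonneg[OF metric] by (simp add: Lim_transform_eventually max_def)
qed

lemma weight_approx_tendsto: "weight_approx F e \<longlonglongrightarrow> weight F e"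
proof (cases "\<exists>n. both_halt e n")
  case True
  then obtain n x y where "run e (2 * e) n = Suc x" "run e (2 * e + 1) n = Suc y"
    unfolding both_halt_def by (meson not0_implies_Suc)
  from weight_approx_tendsto_dist[OF this] have "convergent (weight_approx F e)"
    unfolding convergent_def ..
  then show ?thesis unfolding weight_def by (simp add: convergent_LIMSEQ_iff)
next
  case False
  then have "weight_approx F e = (\<lambda>_. 3)" by (auto simp: weight_approx_def)
  then show ?thesis by (simp add: weight_def)
qed

lemma weight_eq_if_halts:
  assumes "run e (2 * e) n = Suc x" "run e (2 * e + 1) n = Suc y"
  shows "weight F e = 3 + d (p x) (p y)"
  using LIMSEQ_unique[OF weight_approx_tendsto weight_approx_tendsto_dist[OF assms]] .

lemma weight_ge: "3 \<le> weight F e"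
  by (rule LIMSEQ_le_const[OF weight_approx_tendsto]) (simp add: weight_approx_ge)

lemma left_ce_metric_space_diag:
  assumes "computable3 F" shows "left_ce_metric_space (range real) (diag_dist F) real"
proof -
  interpret diag: Metric_space "range real" "diag_dist F"
    unfolding diag_dist_def using weight_ge
    by (intro Metric_space_max_weight_dist) (meson less_le_trans zero_less_numeral)
  have "diag.mcomplete"
    unfolding diag_dist_def by (rule mcomplete_max_weight_dist[of 3]) (simp_all add: weight_ge)
  moreover have "left_ce_dists (diag_dist F) real"
    unfolding left_ce_dists_def
  proof (intro exI[of _ "diag_dist_code F"] conjI allI)
    show "computable3 (diag_dist_code F)" using assms by (rule computable3_diag_dist_code)
    fix i k
    show "mono (\<lambda>s. rat_of_code (diag_dist_code F i k s))"
    proof (rule monoI)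
      fix s s' :: nat assume "s \<le> s'"
      then have "weight_approx F a s \<le> weight_approx F a s'" for a
        using monoD[OF mono_weight_approx] by blast
      then show "rat_of_code (diag_dist_code F i k s) \<le> rat_of_code (diag_dist_code F i k s')"
        by (simp add: rat_of_code_diag_dist_code max.mono del: max.bounded_iff)
    qed
    show "(\<lambda>s. rat_of_code (diag_dist_code F i k s)) \<longlonglongrightarrow> diag_dist F (real i) (real k)"
      by (simp add: rat_of_code_diag_dist_code diag_dist_of_nat tendsto_max weight_approx_tendsto)
  qed
  moreover have "diag.mtopology closure_of range real = range real"
    using closure_of_topspace[of diag.mtopology] by simp
  ultimately show ?thesis
    using diag.Metric_space_axioms by (simp add: left_ce_metric_space_def)
qed

lemma ultrametric_diag: "ultrametric A (diag_dist F)"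
  unfolding diag_dist_def using weight_ge
  by (intro ultrametric_max_weight_dist) (meson order_trans zero_le_numeral)

lemma first_point_dist_le:
  assumes "cauchy_name_for d p g z" "z \<in> M" shows "d (p (g 0)) z \<le> 1"
proof -
  have first: "d (p (g 0)) (p (g k)) \<le> 1" for k
    using assms(1) unfolding cauchy_name_for_def cauchy_name_def by (metis le0 power_0)
  have "d (p (g 0)) z \<le> 1 + d (p (g k)) z" for k
    using Metric_space.triangle[OF metric, of "p (g 0)" "p (g k)" z] first[of k] points_in assms(2)
    by fastforce
  moreover have "(\<lambda>k. 1 + d (p (g k)) z) \<longlonglongrightarrow> 1 + 0"
    using assms(1) unfolding cauchy_name_for_def by (intro tendsto_intros) auto
  ultimately show ?thesis by (intro tendsto_le[OF _ _ tendsto_const]) auto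
qed

lemma no_computable_embedding_diag:
  "\<not> (\<exists>f. computable_isometric_embedding (range real) (diag_dist F) real M d p f)"
proof
  assume "\<exists>f. computable_isometric_embedding (range real) (diag_dist F) real M d p f"
  then obtain f h where iso: "isometric_embedding (range real) (diag_dist F) M d f"
    and "computable2 h" and names: "\<And>k. cauchy_name_for d p (h k) (f (real k))"
    unfolding computable_isometric_embedding_def by blast
  then obtain c where c: "\<And>x y. rec_eval c [x, y] (h x y)" unfolding computable2_def by blast
  define e where "e = recf_code c"
  define a b where "a = f (real (2 * e))" and "b = f (real (2 * e + 1))"
  define x y where "x = h (2 * e) 0" and "y = h (2 * e + 1) 0"
  obtain n1 n2 where "\<forall>s\<ge>n1. run e (2 * e) s = Suc x" "\<forall>s\<ge>n2. run e (2 * e + 1) s = Suc y"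
    using run_eventually_eq[OF c] unfolding e_def x_def y_def by meson
  then have "run e (2 * e) (max n1 n2) = Suc x" "run e (2 * e + 1) (max n1 n2) = Suc y"
    by simp_all
  have "d a b = diag_dist F (real (2 * e)) (real (2 * e + 1))"
    using iso unfolding isometric_embedding_def a_def b_def by blast
  also have "\<dots> = weight F e"
    by (simp only: diag_dist_of_nat) simp
  also have "\<dots> = 3 + d (p x) (p y)"
    by (rule weight_eq_if_halts) fact+
  finally have "d a b = 3 + d (p x) (p y)" .
  moreover have in_M: "a \<in> M" "b \<in> M" "p x \<in> M" "p y \<in> M"
    using iso points_in unfolding a_def b_def isometric_embedding_def by blast+
  moreover have "d (p x) a \<le> 1" "d (p y) b \<le> 1"
    using first_point_dist_le[OF names[of "2 * e"]] first_point_dist_le[OF names[of "2 * e + 1"]] in_M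
    unfolding a_def b_def x_def y_def by blast+
  moreover have "d a b \<le> d a (p x) + d (p x) b" "d (p x) b \<le> d (p x) (p y) + d (p y) b"
    using Metric_space.triangle[OF metric in_M(1,3,2)] Metric_space.triangle[OF metric in_M(3,4,2)]
    by simp_all
  moreover have "d a (p x) = d (p x) a" by (rule Metric_space.commute[OF metric])
  ultimately show False by linarith
qed

end

theorem exists_left_ce_ultrametric_not_computably_embeddable:
  assumes "left_ce_metric_space M d p"
  shows "\<exists>(A :: real set) dA q. left_ce_metric_space A dA q \<and> ultrametric A dA \<and>
           \<not> (\<exists>f. computable_isometric_embedding A dA q M d p f)"
proof -
  obtain F where "computable3 F" and "left_ce_approximation M d p F"
    using assms unfolding left_ce_metric_space_def left_ce_dists_def left_ce_approximation_def
    by blast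
  then show ?thesis
    using left_ce_approximation.left_ce_metric_space_diag left_ce_approximation.ultrametric_diag
      left_ce_approximation.no_computable_embedding_diag by blast
qed

theorem mainTheorem15:
  fixes M :: "'a set" and d :: "'a \<Rightarrow> 'a \<Rightarrow> real" and p :: "nat \<Rightarrow> 'a"
  shows
   "(left_ce_metric_space M d p \<longrightarrow>
      (\<exists>(A :: real set) dA q. left_ce_metric_space A dA q \<and> ultrametric A dA \<and>
         \<not> (\<exists>f. computable_isometric_embedding A dA q M d p f)))
    \<and>
    \<not> (\<exists>(U :: 'a set) dU pU. left_ce_metric_space U dU pU \<and>
         (\<forall>(A :: real set) dA q. left_ce_metric_space A dA q \<longrightarrow>
            (\<exists>f. computable_isometric_embedding A dA q U dU pU f)))"
proof (intro conjI impI notI)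
  show "\<exists>(A :: real set) dA q. left_ce_metric_space A dA q \<and> ultrametric A dA \<and>
          \<not> (\<exists>f. computable_isometric_embedding A dA q M d p f)"
    if "left_ce_metric_space M d p"
    using that by (rule exists_left_ce_ultrametric_not_computably_embeddable)
next
  assume "\<exists>(U :: 'a set) dU pU. left_ce_metric_space U dU pU \<and>
            (\<forall>(A :: real set) dA q. left_ce_metric_space A dA q \<longrightarrow>
              (\<exists>f. computable_isometric_embedding A dA q U dU pU f))"
  then obtain U :: "'a set" and dU pU where U: "left_ce_metric_space U dU pU"
    and universal: "\<And>(A :: real set) dA q. left_ce_metric_space A dA q \<Longrightarrow>
                      \<exists>f. computable_isometric_embedding A dA q U dU pU f"
    by blast
  from exists_left_ce_ultrametric_not_computably_embeddable[OF U] show False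
    using universal by blast
qed

end
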